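(* Let $A\in\mathbb R^{n\times n}$ be tridiagonal, $n\ge 2$, and let $Q\in\mathbb R^{2n\times 2n}$ be the orthogonal matrix produced by Algorithm 1 (described in the context) applied to $A$. Then for every $1\le k<n$, the matrices $Q(1{:}k,\,k{+}1{:}n)$ and $Q(n{+}1{:}n{+}k,\,k{+}1{:}n)$ have rank at most $2$.
   Context: A Givens rotation on rows $p\ne q$ is an orthogonal matrix $G\in\mathbb R^{2n\times 2n}$ equal to the identity except in the entries $(p,p),(p,q),(q,p),(q,q)$, which form a $2\times2$ rotation $\begin{bmatrix}c&s\\-s&c\end{bmatrix}$, $c^2+s^2=1$. "Rotate rows $p,q$ to annihilate $R(q,j)$" means: choose such a $G$ for which $(G^{T}R)(q,j)=0$ and then update $R\leftarrow G^{T}R$, $Q\leftarrow QG$. Algorithm 1: Initialize $Q=I_{2n}$ and $R=\begin{bmatrix}A\\ I_n\end{bmatrix}\in\mathbb R^{2n\times n}$. First rotate rows $1,n+1$ to annihilate $R(n+1,1)$; then rotate rows $1,2$ to annihilate $R(2,1)$. Then for $i=2,\dots,n$: (a) rotate rows $n+1,n+i$ to annihilate $R(n+i,i)$; (b) rotate rows $i,n+1$ to annihilate $R(n+1,i)$; (c) if $i<n$, rotate rows $i,i+1$ to annihilate $R(i+1,i)$. On output $QR=\begin{bmatrix}A\\ I\end{bmatrix}$ with $R$ upper triangular. Notation $Q(a{:}b,c{:}d)$ denotes the submatrix with rows $a,\dots,b$ and columns $c,\dots,d$. *)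

theory Defs
  imports "Jordan_Normal_Form.DL_Rank" "Jordan_Normal_Form.DL_Submatrix"
begin

(* Conventions: Jordan_Normal_Form matrices are 0-indexed; the algorithm below is
   written with the paper's 1-based indices, which are shifted by 1 where used. *)

definition tridiagonal :: "real mat \<Rightarrow> bool" where
  "tridiagonal A \<longleftrightarrow> (\<forall>i<dim_row A. \<forall>j<dim_col A. (i + 1 < j \<or> j + 1 < i) \<longrightarrow> A $$ (i, j) = 0)"

definition givens_mat :: "nat \<Rightarrow> nat \<Rightarrow> nat \<Rightarrow> real \<Rightarrow> real \<Rightarrow> real mat" where
  "givens_mat N p q c s = mat N N (\<lambda>(i, j).
     if i = p \<and> j = p then c
     else if i = p \<and> j = q then s
     else if i = q \<and> j = p then - s
     else if i = q \<and> j = q then c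
     else if i = j then 1 else 0)"

(* Any admissible choice of rotation is allowed. *)
definition givens_step :: "nat \<Rightarrow> nat \<times> nat \<times> nat \<Rightarrow> real mat \<times> real mat \<Rightarrow> real mat \<times> real mat \<Rightarrow> bool" where
  "givens_step N t S S' \<longleftrightarrow>
     (case t of (p, q, j) \<Rightarrow> case S of (Q, R) \<Rightarrow>
       (\<exists>c s. c\<^sup>2 + s\<^sup>2 = 1 \<and>
          (let G = givens_mat N (p - 1) (q - 1) c s in
             (transpose_mat G * R) $$ (q - 1, j - 1) = 0 \<and>
             S' = (Q * G, transpose_mat G * R))))"

inductive givens_run :: "nat \<Rightarrow> (nat \<times> nat \<times> nat) list \<Rightarrow> real mat \<times> real mat \<Rightarrow> real mat \<times> real mat \<Rightarrow> bool"
  for N where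
  run_nil: "givens_run N [] S S"
| run_cons: "givens_step N t S S' \<Longrightarrow> givens_run N ts S' S'' \<Longrightarrow> givens_run N (t # ts) S S''"

definition alg1_rotations :: "nat \<Rightarrow> (nat \<times> nat \<times> nat) list" where
  "alg1_rotations n = [(1, n + 1, 1), (1, 2, 1)] @
     concat (map (\<lambda>i. [(n + 1, n + i, i), (i, n + 1, i)] @ (if i < n then [(i, i + 1, i)] else []))
                 [2..<n + 1])"

definition alg1_init_R :: "nat \<Rightarrow> real mat \<Rightarrow> real mat" where
  "alg1_init_R n A = A @\<^sub>r 1\<^sub>m n"

definition alg1_Q :: "nat \<Rightarrow> real mat \<Rightarrow> real mat \<Rightarrow> bool" where
  "alg1_Q n A Q \<longleftrightarrow> (\<exists>R. givens_run (2 * n) (alg1_rotations n) (1\<^sub>m (2 * n), alg1_init_R n A) (Q, R))"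

end

theory Submission
  imports Defs
begin

text \<open>Fix 1 \<le> k < n. The rotations of Algorithm 1 up to stage k only touch (0-based)
  columns 0..k and n..n+k-1 of Q, while all later rotations only touch columns k..n and
  n+k..2n-1. At the moment of the split, the columns of the second group, restricted to the
  rows 0..k-1 and n..n+k-1, are therefore spanned by the current columns k and n (the others
  are still unit vectors vanishing on these rows). Rotating columns preserves this span
  property, so every column k..n-1 of the final Q restricted to these rows lies in a fixed
  two-dimensional space. The argument uses only the rotation pattern: the entries of A, and
  in particular its tridiagonality, play no role.\<close>

lemma dim_givens_mat [simp]:
  "dim_row (givens_mat N p q c s) = N" "dim_col (givens_mat N p q c s) = N"
  by (simp_all add: givens_mat_def)

lemma givens_mat_carrier: "givens_mat N p q c s \<in> carrier_mat N N"
  by (rule carrier_matI) simp_all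

lemma mult_givens_mat_index:
  assumes Q: "Q \<in> carrier_mat N N" and "p < N" "q < N" "p \<noteq> q" "i < N" "j < N"
  shows "(Q * givens_mat N p q c s) $$ (i, j) =
    (if j = p then c * Q $$ (i, p) - s * Q $$ (i, q)
     else if j = q then s * Q $$ (i, p) + c * Q $$ (i, q) else Q $$ (i, j))"
proof -
  define X where "X = (if j = p then c else if j = q then s else 0)"
  define Y where "Y = (if j = p then -s else if j = q then c else 0)"
  define Z where "Z = (if j \<noteq> p \<and> j \<noteq> q then 1 else (0::real))"
  have col: "\<And>l. l < N \<Longrightarrow> Q $$ (i, l) * givens_mat N p q c s $$ (l, j) =
     (if l = p then Q $$ (i, l) * X else 0) + (if l = q then Q $$ (i, l) * Y else 0)
     + (if l = j then Q $$ (i, l) * Z else 0)"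
    using assms unfolding X_def Y_def Z_def by (auto simp: givens_mat_def)
  have "(Q * givens_mat N p q c s) $$ (i, j) =
      (\<Sum>l\<in>{0..<N}. Q $$ (i, l) * givens_mat N p q c s $$ (l, j))"
    using assms by (simp add: scalar_prod_def)
  also have "\<dots> = (\<Sum>l\<in>{0..<N}. (if l = p then Q $$ (i, l) * X else 0)
      + (if l = q then Q $$ (i, l) * Y else 0) + (if l = j then Q $$ (i, l) * Z else 0))"
    by (rule sum.cong) (auto simp: col)
  also have "\<dots> = Q $$ (i, p) * X + Q $$ (i, q) * Y + Q $$ (i, j) * Z"
    unfolding sum.distrib using assms by (simp add: sum.delta)
  finally show ?thesis
    unfolding X_def Y_def Z_def using assms by auto
qed

lemma givens_run_invariant:
  assumes "givens_run N ts S S'"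
    and "fst S \<in> carrier_mat N N" and "P (fst S)"
    and "\<forall>(p, q, j)\<in>set ts. ok p q"
    and "\<And>Q p q c s. Q \<in> carrier_mat N N \<Longrightarrow> P Q \<Longrightarrow> ok p q \<Longrightarrow>
           P (Q * givens_mat N (p - 1) (q - 1) c s)"
  shows "P (fst S') \<and> fst S' \<in> carrier_mat N N"
  using assms
proof (induction rule: givens_run.induct)
  case (run_nil S)
  then show ?case by simp
next
  case (run_cons t S S' ts S'')
  obtain p q j where t: "t = (p, q, j)" by (cases t)
  obtain Q R where S: "S = (Q, R)" by (cases S)
  from run_cons.hyps(1) obtain c s where
    S': "fst S' = Q * givens_mat N (p - 1) (q - 1) c s"
    unfolding givens_step_def t S by (auto simp: Let_def)
  have "Q \<in> carrier_mat N N" "P Q" using run_cons.prems(1,2) S by simp_all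
  moreover have "ok p q" using run_cons.prems(3) t by auto
  ultimately have "P (fst S')" "fst S' \<in> carrier_mat N N"
    unfolding S' using run_cons.prems(4) givens_mat_carrier by auto
  then show ?case using run_cons.IH run_cons.prems(3,4) by simp
qed

inductive_cases givens_run_consE: "givens_run N (t # ts) S S''"

lemma givens_run_appendE:
  assumes "givens_run N (xs @ ys) S S''"
  obtains S' where "givens_run N xs S S'" and "givens_run N ys S' S''"
  using assms
proof (induction xs arbitrary: S)
  case Nil
  then show ?case by (metis append_Nil run_nil)
next
  case (Cons x xs)
  from Cons.prems(2) obtain S1 where "givens_step N x S S1" "givens_run N (xs @ ys) S1 S''"
    by (auto elim: givens_run_consE)
  then show ?case using Cons.IH Cons.prems(1) run_cons by meson
qed

text \<open>Rotations are listed 1-based, while U is a set of 0-based column indices of Q.\<close>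

definition rotations_within :: "nat set \<Rightarrow> (nat \<times> nat \<times> nat) list \<Rightarrow> bool" where
  "rotations_within U ts \<longleftrightarrow> (\<forall>(p, q, j)\<in>set ts. p - 1 \<in> U \<and> q - 1 \<in> U \<and> p - 1 \<noteq> q - 1)"

lemma givens_run_other_columns_unchanged:
  assumes run: "givens_run N ts (Q0, R0) (Q, R)" and Q0: "Q0 \<in> carrier_mat N N"
    and U: "U \<subseteq> {..<N}" and "rotations_within U ts"
    and "i < N" "c < N" "c \<notin> U"
  shows "Q $$ (i, c) = Q0 $$ (i, c)"
proof -
  let ?P = "\<lambda>Q. \<forall>i<N. \<forall>c<N. c \<notin> U \<longrightarrow> Q $$ (i, c) = Q0 $$ (i, c)"
  let ?ok = "\<lambda>p q. p - 1 \<in> U \<and> q - 1 \<in> U \<and> p - 1 \<noteq> q - 1"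
  have "?P Q"
  proof (rule givens_run_invariant[OF run, of ?P ?ok, unfolded fst_conv, THEN conjunct1])
    show "Q0 \<in> carrier_mat N N" by (rule Q0)
    show "\<forall>(p, q, j)\<in>set ts. ?ok p q" using assms(4) by (simp add: rotations_within_def)
    fix Q' :: "real mat" and p q c s
    assume "Q' \<in> carrier_mat N N" "?P Q'" "?ok p q"
    moreover have "p - 1 < N" "q - 1 < N" using \<open>?ok p q\<close> U by auto
    ultimately show "?P (Q' * givens_mat N (p - 1) (q - 1) c s)"
      using mult_givens_mat_index by (metis (no_types, lifting))
  qed simp
  then show ?thesis using assms(5-) by blast
qed

definition columns_in_span2 ::
    "real mat \<Rightarrow> nat set \<Rightarrow> nat set \<Rightarrow> (nat \<Rightarrow> real) \<Rightarrow> (nat \<Rightarrow> real) \<Rightarrow> bool" where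
  "columns_in_span2 Q I J u v \<longleftrightarrow> (\<forall>c\<in>J. \<exists>a b. \<forall>i\<in>I. Q $$ (i, c) = a * u i + b * v i)"

lemma columns_in_span2_mono:
  assumes "columns_in_span2 Q I J u v" "I' \<subseteq> I" "J' \<subseteq> J"
  shows "columns_in_span2 Q I' J' u v"
  using assms unfolding columns_in_span2_def by (meson subsetD)

lemma columns_in_span2_other_columns_zero:
  assumes "\<And>c i. c \<in> J - {a, b} \<Longrightarrow> i \<in> I \<Longrightarrow> Q $$ (i, c) = 0"
  shows "columns_in_span2 Q I J (\<lambda>i. Q $$ (i, a)) (\<lambda>i. Q $$ (i, b))"
  unfolding columns_in_span2_def
proof
  fix c assume "c \<in> J"
  consider "c = a" | "c = b" | "c \<in> J - {a, b}" using \<open>c \<in> J\<close> by blast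
  then show "\<exists>x y. \<forall>i\<in>I. Q $$ (i, c) = x * Q $$ (i, a) + y * Q $$ (i, b)"
    by cases (use assms in \<open>auto intro: exI[of _ 0] exI[of _ 1]\<close>)
qed

lemma columns_in_span2_mult_givens_mat:
  assumes Q: "Q \<in> carrier_mat N N" and span: "columns_in_span2 Q I J u v"
    and "I \<subseteq> {..<N}" "J \<subseteq> {..<N}" "p \<in> J" "q \<in> J" "p \<noteq> q"
  shows "columns_in_span2 (Q * givens_mat N p q c s) I J u v"
  unfolding columns_in_span2_def
proof
  fix j assume "j \<in> J"
  obtain a1 b1 where p: "\<forall>i\<in>I. Q $$ (i, p) = a1 * u i + b1 * v i"
    using span \<open>p \<in> J\<close> unfolding columns_in_span2_def by blast
  obtain a2 b2 where q: "\<forall>i\<in>I. Q $$ (i, q) = a2 * u i + b2 * v i"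
    using span \<open>q \<in> J\<close> unfolding columns_in_span2_def by blast
  obtain a b where j: "\<forall>i\<in>I. Q $$ (i, j) = a * u i + b * v i"
    using span \<open>j \<in> J\<close> unfolding columns_in_span2_def by blast
  have entry: "\<And>i. i \<in> I \<Longrightarrow> (Q * givens_mat N p q c s) $$ (i, j) =
      (if j = p then c * Q $$ (i, p) - s * Q $$ (i, q)
       else if j = q then s * Q $$ (i, p) + c * Q $$ (i, q) else Q $$ (i, j))"
    using mult_givens_mat_index[OF Q] assms(3-) \<open>j \<in> J\<close> by blast
  consider "j = p" | "j = q" | "j \<noteq> p" "j \<noteq> q" by blast
  then show "\<exists>a b. \<forall>i\<in>I. (Q * givens_mat N p q c s) $$ (i, j) = a * u i + b * v i"
  proof cases
    case 1
    show ?thesis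
      by (rule exI[of _ "c * a1 - s * a2"], rule exI[of _ "c * b1 - s * b2"])
         (use entry p q 1 in \<open>simp add: algebra_simps\<close>)
  next
    case 2
    show ?thesis
      by (rule exI[of _ "s * a1 + c * a2"], rule exI[of _ "s * b1 + c * b2"])
         (use entry p q 2 \<open>p \<noteq> q\<close> in \<open>simp add: algebra_simps\<close>)
  next
    case 3
    then show ?thesis using entry j by auto
  qed
qed

lemma givens_run_columns_in_span2:
  assumes run: "givens_run N ts (Q0, R0) (Q, R)" and Q0: "Q0 \<in> carrier_mat N N"
    and "I \<subseteq> {..<N}" and J: "J \<subseteq> {..<N}" and "rotations_within J ts"
    and "columns_in_span2 Q0 I J u v"
  shows "columns_in_span2 Q I J u v \<and> Q \<in> carrier_mat N N"
proof (rule givens_run_invariant[OF run, of "\<lambda>Q. columns_in_span2 Q I J u v"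
      "\<lambda>p q. p - 1 \<in> J \<and> q - 1 \<in> J \<and> p - 1 \<noteq> q - 1", unfolded fst_conv])
  show "\<forall>(p, q, j)\<in>set ts. p - 1 \<in> J \<and> q - 1 \<in> J \<and> p - 1 \<noteq> q - 1"
    using assms(5) by (simp add: rotations_within_def)
  fix Q' :: "real mat" and p q c s
  assume "Q' \<in> carrier_mat N N" "columns_in_span2 Q' I J u v" "p - 1 \<in> J \<and> q - 1 \<in> J \<and> p - 1 \<noteq> q - 1"
  then show "columns_in_span2 (Q' * givens_mat N (p - 1) (q - 1) c s) I J u v"
    using columns_in_span2_mult_givens_mat assms(3,4) by blast
qed (use Q0 assms(6) in simp_all)

lemma rank_submatrix_le_2_if_columns_in_span2:
  fixes Q :: "real mat"
  assumes Q: "Q \<in> carrier_mat nr nc" and I: "I \<subseteq> {..<nr}" and J: "J \<subseteq> {..<nc}"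
    and span: "columns_in_span2 Q I J u v"
  shows "vec_space.rank (card I) (submatrix Q I J) \<le> 2"
proof -
  obtain a b where ab: "\<And>c i. c \<in> J \<Longrightarrow> i \<in> I \<Longrightarrow> Q $$ (i, c) = a c * u i + b c * v i"
    using span unfolding columns_in_span2_def by metis
  have cI: "{i. i < nr \<and> i \<in> I} = I" and cJ: "{j. j < nc \<and> j \<in> J} = J"
    using I J by auto
  define B1 where "B1 = mat (card I) (card J) (\<lambda>(r, c). u (pick I r) * a (pick J c))"
  define B2 where "B2 = mat (card I) (card J) (\<lambda>(r, c). v (pick I r) * b (pick J c))"
  have "submatrix Q I J = B1 + B2"
  proof (rule eq_matI)
    fix r c assume "r < dim_row (B1 + B2)" and "c < dim_col (B1 + B2)"
    then have r: "r < card I" and c: "c < card J" by (simp_all add: B1_def B2_def)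
    have "pick I r \<in> I" "pick J c \<in> J" using pick_in_set r c by auto
    moreover have "submatrix Q I J $$ (r, c) = Q $$ (pick I r, pick J c)"
      using Q r c cI cJ by (intro submatrix_index) auto
    ultimately show "submatrix Q I J $$ (r, c) = (B1 + B2) $$ (r, c)"
      using r c ab unfolding B1_def B2_def by (auto simp: mult.commute)
  qed (use Q cI cJ in \<open>auto simp: B1_def B2_def dim_submatrix\<close>)
  moreover have "vec_space.rank (card I) (B1 + B2)
      \<le> vec_space.rank (card I) B1 + vec_space.rank (card I) B2"
    by (rule vec_space.rank_subadditive[of _ _ "card J"]) (auto simp: B1_def B2_def)
  moreover have "vec_space.rank (card I) B1 \<le> 1"
    by (rule vec_space.rank_le_1_product_entries[of _ _ "card J"
          "\<lambda>r. u (pick I r)" "\<lambda>c. a (pick J c)"]) (auto simp: B1_def)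
  moreover have "vec_space.rank (card I) B2 \<le> 1"
    by (rule vec_space.rank_le_1_product_entries[of _ _ "card J"
          "\<lambda>r. v (pick I r)" "\<lambda>c. b (pick J c)"]) (auto simp: B2_def)
  ultimately show ?thesis by simp
qed

definition alg1_stage :: "nat \<Rightarrow> nat \<Rightarrow> (nat \<times> nat \<times> nat) list" where
  "alg1_stage n i = [(n + 1, n + i, i), (i, n + 1, i)] @ (if i < n then [(i, i + 1, i)] else [])"

lemma alg1_rotations_split:
  assumes "1 \<le> k" "k < n"
  shows "alg1_rotations n =
    ([(1, n + 1, 1), (1, 2, 1)] @ concat (map (alg1_stage n) [2..<k + 1]))
    @ concat (map (alg1_stage n) [k + 1..<n + 1])"
proof -
  have "[2..<n + 1] = [2..<k + 1] @ [k + 1..<n + 1]"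
    using upt_add_eq_append[of 2 "k + 1" "n - k"] assms by simp
  then show ?thesis unfolding alg1_rotations_def alg1_stage_def by simp
qed

lemma alg1_Q_columns_in_span2:
  assumes "alg1_Q n A Q" and "1 \<le> k" "k < n"
  shows "Q \<in> carrier_mat (2 * n) (2 * n) \<and>
    (\<exists>u v. columns_in_span2 Q ({0..<k} \<union> {n..<n + k}) {k..<n} u v)"
proof -
  define N where "N = 2 * n"
  define pre where "pre = [(1, n + 1, 1), (1, 2, 1)] @ concat (map (alg1_stage n) [2..<k + 1])"
  define post where "post = concat (map (alg1_stage n) [k + 1..<n + 1])"
  define U where "U = {..k} \<union> {n..<n + k}"
  define T where "T = {k..n} \<union> {n + k..<N}"
  define I where "I = {0..<k} \<union> {n..<n + k}"
  obtain R where "givens_run N (pre @ post) (1\<^sub>m N, alg1_init_R n A) (Q, R)"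
    using assms alg1_rotations_split unfolding alg1_Q_def N_def pre_def post_def by metis
  then obtain Qk Rk where pre: "givens_run N pre (1\<^sub>m N, alg1_init_R n A) (Qk, Rk)"
    and post: "givens_run N post (Qk, Rk) (Q, R)"
    by (metis givens_run_appendE surj_pair)
  have UN: "U \<subseteq> {..<N}" and TN: "T \<subseteq> {..<N}" and IN: "I \<subseteq> {..<N}"
    using assms unfolding U_def T_def I_def N_def by auto
  have "rotations_within U pre"
    using assms by (auto simp: rotations_within_def pre_def alg1_stage_def U_def)
  then have unit_cols: "Qk $$ (i, c) = (if i = c then 1 else 0)"
    if "i < N" "c < N" "c \<notin> U" for i c
    using givens_run_other_columns_unchanged[OF pre _ UN _ that] that by simp
  have Qk: "Qk \<in> carrier_mat N N"
    using givens_run_invariant[OF pre, of "\<lambda>_. True" "\<lambda>_ _. True"] by simp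
  have "Qk $$ (i, c) = 0" if "c \<in> T - {k, n}" "i \<in> I" for c i
    using that unit_cols IN assms(3) unfolding T_def U_def I_def N_def by auto
  then have "columns_in_span2 Qk I T (\<lambda>i. Qk $$ (i, k)) (\<lambda>i. Qk $$ (i, n))"
    by (rule columns_in_span2_other_columns_zero)
  moreover have "rotations_within T post"
    using assms by (auto simp: rotations_within_def post_def alg1_stage_def T_def N_def)
  ultimately have "columns_in_span2 Q I T (\<lambda>i. Qk $$ (i, k)) (\<lambda>i. Qk $$ (i, n))"
      and "Q \<in> carrier_mat N N"
    using givens_run_columns_in_span2[OF post Qk IN TN] by auto
  moreover have "{k..<n} \<subseteq> T" unfolding T_def by auto
  ultimately show ?thesis
    unfolding I_def N_def by (meson columns_in_span2_mono order_refl)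
qed

theorem theorem4p1:
  fixes A Q :: "real mat" and n :: nat
  assumes "A \<in> carrier_mat n n"
    and "tridiagonal A"
    and "n \<ge> 2"
    and "alg1_Q n A Q"
  shows "\<forall>k. 1 \<le> k \<and> k < n \<longrightarrow>
           vec_space.rank k (submatrix Q {0..<k} {k..<n}) \<le> 2 \<and>
           vec_space.rank k (submatrix Q {n..<n + k} {k..<n}) \<le> 2"
proof (intro allI impI)
  fix k assume k: "1 \<le> k \<and> k < n"
  then obtain u v where Q: "Q \<in> carrier_mat (2 * n) (2 * n)"
    and span: "columns_in_span2 Q ({0..<k} \<union> {n..<n + k}) {k..<n} u v"
    using alg1_Q_columns_in_span2 assms(4) by blast
  then have "columns_in_span2 Q {0..<k} {k..<n} u v" "columns_in_span2 Q {n..<n + k} {k..<n} u v"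
    by (auto elim: columns_in_span2_mono)
  moreover have "{0..<k} \<subseteq> {..<2 * n}" "{n..<n + k} \<subseteq> {..<2 * n}" "{k..<n} \<subseteq> {..<2 * n}"
    using k by auto
  moreover have "card {0..<k} = k" "card {n..<n + k} = k" by simp_all
  ultimately show "vec_space.rank k (submatrix Q {0..<k} {k..<n}) \<le> 2 \<and>
      vec_space.rank k (submatrix Q {n..<n + k} {k..<n}) \<le> 2"
    using rank_submatrix_le_2_if_columns_in_span2[OF Q] by metis
qed

end
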